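(* Let $B$ be a Banach space, $C\subset B$ a convex set, $f:B\to\mathbb{R}\cup\{+\infty\}$ a function, and $k$ a symmetric bilinear map, with pairing written $\langle\pi,k(\gamma)\rangle$, which is negative (not necessarily definite) on $\Delta C=\mathrm{Span}\{\pi-\gamma:\pi,\gamma\in C\}$, i.e. $\langle z,k(z)\rangle\leq0$ for all $z\in\Delta C$. Define $\mathcal{L}:C\to\mathbb{R}\cup\{+\infty\}$ by $\mathcal{L}(\pi)=\frac12\langle\pi,k(\pi)\rangle+2f(\pi)$ and $\mathcal{F}(\pi,\gamma)=\frac12\langle\pi,k(\gamma)\rangle+f(\pi)+f(\gamma)$ for $\pi,\gamma\in C$. Assume there exists $\pi_0\in C$ with $\mathcal{L}(\pi_0)<+\infty$. Then for every $(\pi_*,\gamma_* )\in\arg\min_{C\times C}\mathcal{F}$, one has $\mathcal{F}(\pi_*,\pi_* )=\mathcal{F}(\gamma_*,\gamma_* )=\mathcal{F}(\pi_*,\gamma_* )$. Moreover, if either $k$ is definite on $\Delta C$ (i.e. $\langle z,k(z)\rangle=0$, $z\in\Delta C$ implies $z=0$) or $f$ is strictly convex, then $\pi_*=\gamma_*$. *)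

theory Defs
  imports "HOL-Analysis.Analysis"
begin

definition diff_span :: "'b::real_vector set \<Rightarrow> 'b set" where
  "diff_span C = span {p - g | p g. p \<in> C \<and> g \<in> C}"

definition strictly_convex_on_ereal :: "'b::real_vector set \<Rightarrow> ('b \<Rightarrow> ereal) \<Rightarrow> bool" where
  "strictly_convex_on_ereal C f \<longleftrightarrow>
     (\<forall>x\<in>C. \<forall>y\<in>C. x \<noteq> y \<longrightarrow> f x < \<infinity> \<longrightarrow> f y < \<infinity> \<longrightarrow>
        (\<forall>t::real. 0 < t \<and> t < 1 \<longrightarrow>
           f ((1 - t) *\<^sub>R x + t *\<^sub>R y) < ereal (1 - t) * f x + ereal t * f y))"

definition LL :: "('b \<Rightarrow> 'b \<Rightarrow> real) \<Rightarrow> ('b \<Rightarrow> ereal) \<Rightarrow> 'b \<Rightarrow> ereal" where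
  "LL k f p = ereal (k p p / 2) + 2 * f p"

definition FF :: "('b \<Rightarrow> 'b \<Rightarrow> real) \<Rightarrow> ('b \<Rightarrow> ereal) \<Rightarrow> 'b \<Rightarrow> 'b \<Rightarrow> ereal" where
  "FF k f p g = ereal (k p g / 2) + f p + f g"

end

theory Submission
  imports Defs
begin

(* Write z = ps - gs. Expanding k bilinearly,
     F(ps,ps) + F(gs,gs) - 2 F(ps,gs) = <z,k(z)>/2 <= 0,
   while minimality of (ps,gs) makes both F(ps,ps) - F(ps,gs) and F(gs,gs) - F(ps,gs)
   nonnegative; hence both vanish and <z,k(z)> = 0. If k is definite this forces z = 0.
   Otherwise the midpoint m of ps and gs satisfies <m,k(m)> = <ps,k(gs)> because z is
   isotropic, so F(m,m) < F(ps,gs) as soon as f is strictly convex and ps differs from gs. *)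

lemma diff_mem_diff_span: "x \<in> C \<Longrightarrow> y \<in> C \<Longrightarrow> x - y \<in> diff_span C"
  unfolding diff_span_def by (rule span_base) blast

lemma midpoint_eq_half_sum: "midpoint x y = (1/2::real) *\<^sub>R x + (1/2::real) *\<^sub>R y"
  by (simp add: midpoint_def scaleR_right_distrib)

lemma convex_midpoint_mem: "convex C \<Longrightarrow> x \<in> C \<Longrightarrow> y \<in> C \<Longrightarrow> midpoint x y \<in> C"
  unfolding midpoint_eq_half_sum by (rule convexD) auto

lemma symmetric_bilinear_diff_self:
  fixes k :: "'a::real_vector \<Rightarrow> 'a \<Rightarrow> real"
  assumes "bilinear k" and "\<And>x y. k x y = k y x"
  shows "k (x - y) (x - y) = k x x - 2 * k x y + k y y"
  using assms(2)[of y x] by (simp add: bilinear_lsub[OF assms(1)] bilinear_rsub[OF assms(1)])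

lemma symmetric_bilinear_midpoint_self:
  fixes k :: "'a::real_vector \<Rightarrow> 'a \<Rightarrow> real"
  assumes "bilinear k" and "\<And>x y. k x y = k y x"
  shows "k (midpoint x y) (midpoint x y) = (k x x + 2 * k x y + k y y) / 4"
  using assms(2)[of y x]
  by (simp add: midpoint_eq_half_sum bilinear_ladd[OF assms(1)] bilinear_radd[OF assms(1)]
      bilinear_lmul[OF assms(1)] bilinear_rmul[OF assms(1)] add_divide_distrib)

lemma symmetric_bilinear_midpoint_self_if_isotropic:
  fixes k :: "'a::real_vector \<Rightarrow> 'a \<Rightarrow> real"
  assumes "bilinear k" and "\<And>x y. k x y = k y x" and "k (x - y) (x - y) = 0"
  shows "k (midpoint x y) (midpoint x y) = k x y"
  using assms(3) symmetric_bilinear_diff_self[OF assms(1,2), of x y]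
    symmetric_bilinear_midpoint_self[OF assms(1,2), of x y] by simp

lemma strictly_convex_on_ereal_midpoint:
  assumes "strictly_convex_on_ereal C f" and "x \<in> C" "y \<in> C" "x \<noteq> y"
    and "f x = ereal a" "f y = ereal b"
  shows "f (midpoint x y) < ereal ((a + b) / 2)"
proof -
  have "f x < \<infinity>" "f y < \<infinity>"
    using assms(5,6) by simp_all
  with assms(1-4) have "\<forall>t. 0 < t \<and> t < 1 \<longrightarrow>
      f ((1 - t) *\<^sub>R x + t *\<^sub>R y) < ereal (1 - t) * f x + ereal t * f y"
    unfolding strictly_convex_on_ereal_def by blast
  from this[rule_format, of "1/2"] show ?thesis
    using assms(5,6) by (simp add: midpoint_eq_half_sum add_divide_distrib)
qed

lemma LL_eq_FF_diag: "LL k f p = FF k f p p"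
  by (cases "f p") (simp_all add: LL_def FF_def)

lemma FF_ereal: "f p = ereal a \<Longrightarrow> f g = ereal b \<Longrightarrow> FF k f p g = ereal (k p g / 2 + a + b)"
  by (simp add: FF_def)

lemma FF_less_infinityE:
  assumes "\<And>x. f x \<noteq> -\<infinity>" and "FF k f p g < \<infinity>"
  obtains a b where "f p = ereal a" and "f g = ereal b"
  using assms(1)[of p] assms(1)[of g] assms(2) by (cases "f p"; cases "f g") (auto simp: FF_def)

lemma FF_diag_eq_if_minimal:
  fixes k :: "'a::real_vector \<Rightarrow> 'a \<Rightarrow> real"
  assumes "bilinear k" and "\<And>x y. k x y = k y x" and "k (p - g) (p - g) \<le> 0"
    and "f p = ereal a" "f g = ereal b"
    and "FF k f p g \<le> FF k f p p" "FF k f p g \<le> FF k f g g"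
  shows "k (p - g) (p - g) = 0" and "FF k f p p = FF k f p g" and "FF k f g g = FF k f p g"
proof -
  have "k p g / 2 + a + b \<le> k p p / 2 + a + a" "k p g / 2 + a + b \<le> k g g / 2 + b + b"
    using assms(6,7) by (simp_all add: FF_ereal assms(4,5))
  then have "k (p - g) (p - g) = 0"
    and "k p p / 2 + a + a = k p g / 2 + a + b" "k g g / 2 + b + b = k p g / 2 + a + b"
    using assms(3) symmetric_bilinear_diff_self[OF assms(1,2), of p g] by linarith+
  then show "k (p - g) (p - g) = 0" and "FF k f p p = FF k f p g" and "FF k f g g = FF k f p g"
    by (simp_all add: FF_ereal assms(4,5))
qed

lemma FF_midpoint_less_if_isotropic:
  fixes k :: "'a::real_vector \<Rightarrow> 'a \<Rightarrow> real"
  assumes "bilinear k" and "\<And>x y. k x y = k y x" and "k (p - g) (p - g) = 0"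
    and "strictly_convex_on_ereal C f" and "\<And>x. f x \<noteq> -\<infinity>"
    and "p \<in> C" "g \<in> C" "p \<noteq> g" and "f p = ereal a" "f g = ereal b"
  shows "FF k f (midpoint p g) (midpoint p g) < FF k f p g"
proof -
  from assms(4,6-10) have "f (midpoint p g) < ereal ((a + b) / 2)"
    by (rule strictly_convex_on_ereal_midpoint)
  with assms(5) obtain c where "f (midpoint p g) = ereal c" and "c < (a + b) / 2"
    by (cases "f (midpoint p g)") auto
  then show ?thesis
    by (simp add: FF_ereal assms(9,10) symmetric_bilinear_midpoint_self_if_isotropic[OF assms(1-3)])
qed

theorem theorem3:
  fixes C :: "'b::banach set"
    and f :: "'b \<Rightarrow> ereal"
    and k :: "'b \<Rightarrow> 'b \<Rightarrow> real"
    and p0 ps gs :: 'b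
  assumes convC: "convex C"
    and f_notminf: "\<And>x. f x \<noteq> -\<infinity>"
    and bil: "bilinear k"
    and symm: "\<And>x y. k x y = k y x"
    and neg: "\<And>z. z \<in> diff_span C \<Longrightarrow> k z z \<le> 0"
    and p0: "p0 \<in> C" "LL k f p0 < \<infinity>"
    and ps: "ps \<in> C" and gs: "gs \<in> C"
    and argmin: "\<And>p g. p \<in> C \<Longrightarrow> g \<in> C \<Longrightarrow> FF k f ps gs \<le> FF k f p g"
  shows "FF k f ps ps = FF k f gs gs \<and> FF k f gs gs = FF k f ps gs
    \<and> (((\<forall>z\<in>diff_span C. k z z = 0 \<longrightarrow> z = 0) \<or> strictly_convex_on_ereal C f) \<longrightarrow> ps = gs)"
proof -
  have "FF k f ps gs < \<infinity>"
    using argmin[OF p0(1) p0(1)] p0(2) unfolding LL_eq_FF_diag by (rule le_less_trans)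
  with f_notminf obtain a b where a: "f ps = ereal a" and b: "f gs = ereal b"
    by (rule FF_less_infinityE)
  have diff: "ps - gs \<in> diff_span C"
    using ps gs by (rule diff_mem_diff_span)
  have isotropic: "k (ps - gs) (ps - gs) = 0"
    and diag: "FF k f ps ps = FF k f ps gs" "FF k f gs gs = FF k f ps gs"
    using FF_diag_eq_if_minimal[OF bil symm neg[OF diff] a b argmin[OF ps ps] argmin[OF gs gs]]
    by blast+
  have "ps = gs" if "strictly_convex_on_ereal C f"
  proof (rule ccontr)
    assume "ps \<noteq> gs"
    from FF_midpoint_less_if_isotropic[OF bil symm isotropic that f_notminf ps gs this a b]
      and argmin[OF convex_midpoint_mem[OF convC ps gs] convex_midpoint_mem[OF convC ps gs]]
    show False by simp
  qed
  moreover have "ps = gs" if "\<forall>z\<in>diff_span C. k z z = 0 \<longrightarrow> z = 0"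
    using that[rule_format, OF diff isotropic] by simp
  ultimately show ?thesis
    using diag by argo
qed

end
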